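(* Let $G=\langle c,d\mid c^2=d^3\rangle$ be the fundamental group of the complement of the $(2,3)$-torus knot (trefoil) in $S^3$. If $\alpha,\beta\in G$ are conjugate in $G$ and $G=\langle\alpha,\beta\rangle$, then $\alpha$ and $\beta$ are peripheral.
   Context: An element of a knot group $\pi_1(S^3\smallsetminus K)$ is peripheral if it lies in a conjugate of the peripheral subgroup, i.e. the image of $\pi_1$ of the boundary torus of the knot exterior. *)

theory Defs
  imports "HOL-Algebra.Algebra"
begin

text \<open>The trefoil group G = < c, d | c^2 = d^3 >, constructed as the group given by
  this presentation: words in the letters c, d and their inverses, modulo the
  equivalence generated by free cancellation and by inserting/deleting the relator
  c c d^-1 d^-1 d^-1.\<close>

datatype gen = Cg | Dg

type_synonym letter = "bool \<times> gen"   \<comment> \<open>(False, g) = g,  (True, g) = g inverse\<close>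
type_synonym word = "letter list"

fun inv_letter :: "letter \<Rightarrow> letter" where
  "inv_letter (b, g) = (\<not> b, g)"

definition relator :: word where
  "relator = [(False, Cg), (False, Cg), (True, Dg), (True, Dg), (True, Dg)]"

inductive_set word_eq :: "(word \<times> word) set" where
  refl:   "(w, w) \<in> word_eq"
| sym:    "(u, v) \<in> word_eq \<Longrightarrow> (v, u) \<in> word_eq"
| trans:  "(u, v) \<in> word_eq \<Longrightarrow> (v, w) \<in> word_eq \<Longrightarrow> (u, w) \<in> word_eq"
| cancel: "(u @ [l, inv_letter l] @ v, u @ v) \<in> word_eq"
| rel:    "(u @ relator @ v, u @ v) \<in> word_eq"

definition trefoil_group :: "word set monoid" where
  "trefoil_group =
     \<lparr> carrier = UNIV // word_eq,
       monoid.mult = (\<lambda>A B. \<Union>a\<in>A. \<Union>b\<in>B. word_eq `` {a @ b}),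
       monoid.one = word_eq `` {[]} \<rparr>"

definition gen_c :: "word set" where
  "gen_c = word_eq `` {[(False, Cg)]}"

definition gen_d :: "word set" where
  "gen_d = word_eq `` {[(False, Dg)]}"

definition meridian :: "word set" where
  "meridian = inv\<^bsub>trefoil_group\<^esub> gen_d \<otimes>\<^bsub>trefoil_group\<^esub> gen_c"

definition longitude :: "word set" where
  "longitude = (gen_c [^]\<^bsub>trefoil_group\<^esub> (2::nat)) \<otimes>\<^bsub>trefoil_group\<^esub>
                  inv\<^bsub>trefoil_group\<^esub> (meridian [^]\<^bsub>trefoil_group\<^esub> (6::nat))"

definition peripheral_subgroup :: "word set set" where
  "peripheral_subgroup = generate trefoil_group {meridian, longitude}"

definition peripheral :: "word set \<Rightarrow> bool" where
  "peripheral g \<longleftrightarrow> (\<exists>x\<in>carrier trefoil_group. \<exists>p\<in>peripheral_subgroup.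
       g = x \<otimes>\<^bsub>trefoil_group\<^esub> p \<otimes>\<^bsub>trefoil_group\<^esub> inv\<^bsub>trefoil_group\<^esub> x)"

end

theory Submission
  imports Defs
begin

text \<open>The representation \<open>c \<mapsto> S\<close>, \<open>d \<mapsto> U\<close> of \<open>G\<close> in \<open>SL(2,\<int>)\<close> maps generating conjugate
  elements \<open>\<alpha>, \<beta>\<close> to matrices \<open>A, B\<close> of equal trace \<open>t\<close> that generate \<open>S\<close> and \<open>U\<close>. If \<open>t\<close> is
  odd, then modulo 2 the matrices \<open>A, B\<close> lie in the cyclic group generated by \<open>U\<close>, which misses \<open>S\<close>.
  If \<open>t\<close> is even and \<open>t \<noteq> \<plusminus>2\<close>, then modulo \<open>m = |t|\<close> (or \<open>m = 3\<close> if \<open>t = 0\<close>) the group generated by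
  \<open>A, B\<close> is of dihedral type, so \<open>U\<close> and \<open>SUS\<^sup>-\<^sup>1\<close>, neither of which squares to \<open>-1\<close>, would
  commute; they do not. Hence \<open>t = \<plusminus>2\<close>.

  Modulo the central subgroup generated by \<open>c\<^sup>2 = d\<^sup>3\<close>, the group is \<open>\<int>/2 * \<int>/3\<close>, so every element
  is conjugate to a central element times \<open>c\<close>, \<open>d\<^sup>\<plusminus>\<^sup>1\<close> or a cyclic product of syllables
  \<open>c d\<^sup>\<plusminus>\<^sup>1\<close>. Up to sign these syllables map to \<open>T = [1 1; 0 1]\<close> and \<open>L = [1 0; 1 1]\<close>, and any product
  involving both has trace at least 3. So an element with trace \<open>\<plusminus>2\<close> is conjugate to a central
  element times a power of \<open>c d\<close>, which is peripheral, or of \<open>c d\<^sup>-\<^sup>1\<close>, which is conjugate to a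
  power of the meridian \<open>d\<^sup>-\<^sup>1 c\<close>.\<close>

abbreviation G :: "word set monoid" where "G \<equiv> trefoil_group"

abbreviation "lc \<equiv> (False, Cg)"
abbreviation "lC \<equiv> (True, Cg)"
abbreviation "ld \<equiv> (False, Dg)"
abbreviation "lD \<equiv> (True, Dg)"

definition word_class :: "word \<Rightarrow> word set" where
  "word_class w = word_eq `` {w}"

lemma word_eq_append_right: "(u, v) \<in> word_eq \<Longrightarrow> (u @ x, v @ x) \<in> word_eq"
proof (induction rule: word_eq.induct)
  case (cancel u l v) then show ?case using word_eq.cancel[of u l "v @ x"] by simp
next
  case (rel u v) then show ?case using word_eq.rel[of u "v @ x"] by simp
qed (auto intro: word_eq.intros)

lemma word_eq_append_left: "(u, v) \<in> word_eq \<Longrightarrow> (x @ u, x @ v) \<in> word_eq"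
proof (induction rule: word_eq.induct)
  case (cancel u l v) then show ?case using word_eq.cancel[of "x @ u" l v] by simp
next
  case (rel u v) then show ?case using word_eq.rel[of "x @ u" v] by simp
qed (auto intro: word_eq.intros)

lemma word_eq_append: "(u, v) \<in> word_eq \<Longrightarrow> (x, y) \<in> word_eq \<Longrightarrow> (u @ x, v @ y) \<in> word_eq"
  by (meson word_eq_append_left word_eq_append_right word_eq.trans)

lemma equiv_word_eq: "equiv UNIV word_eq"
  unfolding equiv_def refl_on_def sym_def trans_def by (auto intro: word_eq.intros)

lemma word_class_eq_iff: "word_class u = word_class v \<longleftrightarrow> (u, v) \<in> word_eq"
  unfolding word_class_def using eq_equiv_class_iff[OF equiv_word_eq] by auto

lemma carrier_trefoil_group: "carrier G = range word_class"
  unfolding trefoil_group_def word_class_def quotient_def by auto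

lemma word_class_in_carrier [simp]: "word_class w \<in> carrier G"
  by (simp add: carrier_trefoil_group)

lemma mult_word_class [simp]: "word_class u \<otimes>\<^bsub>G\<^esub> word_class v = word_class (u @ v)"
proof -
  have "(\<Union>a\<in>word_class u. \<Union>b\<in>word_class v. word_eq `` {a @ b}) = word_class (u @ v)"
  proof (intro equalityI subsetI)
    fix x assume "x \<in> (\<Union>a\<in>word_class u. \<Union>b\<in>word_class v. word_eq `` {a @ b})"
    then obtain a b where "(u, a) \<in> word_eq" "(v, b) \<in> word_eq" "(a @ b, x) \<in> word_eq"
      by (auto simp: word_class_def)
    then show "x \<in> word_class (u @ v)"
      unfolding word_class_def by (auto intro: word_eq_append word_eq.trans)
  next
    fix x assume "x \<in> word_class (u @ v)"
    moreover have "u \<in> word_class u" "v \<in> word_class v"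
      by (auto simp: word_class_def intro: word_eq.refl)
    ultimately show "x \<in> (\<Union>a\<in>word_class u. \<Union>b\<in>word_class v. word_eq `` {a @ b})"
      unfolding word_class_def by blast
  qed
  then show ?thesis unfolding trefoil_group_def by (simp add: word_class_def)
qed

lemma one_word_class: "\<one>\<^bsub>G\<^esub> = word_class []"
  unfolding trefoil_group_def word_class_def by simp

definition inv_word :: "word \<Rightarrow> word" where
  "inv_word w = rev (map inv_letter w)"

lemma inv_letter_inv_letter [simp]: "inv_letter (inv_letter l) = l"
  by (cases l) auto

lemma inv_word_inv_word [simp]: "inv_word (inv_word w) = w"
  by (simp add: inv_word_def rev_map[symmetric] comp_def)

lemma word_eq_inv_word_append: "(inv_word w @ w, []) \<in> word_eq"
proof (induction w)
  case Nil then show ?case by (simp add: inv_word_def word_eq.refl)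
next
  case (Cons l w)
  have "inv_word (l # w) @ l # w = inv_word w @ [inv_letter l, inv_letter (inv_letter l)] @ w"
    by (simp add: inv_word_def)
  then show ?case using word_eq.cancel[of "inv_word w" "inv_letter l" w] Cons word_eq.trans by metis
qed

lemma group_trefoil_group: "group G"
proof (rule groupI)
  show "\<exists>y\<in>carrier G. y \<otimes>\<^bsub>G\<^esub> x = \<one>\<^bsub>G\<^esub>" if "x \<in> carrier G" for x
  proof -
    from \<open>x \<in> carrier G\<close> obtain w where w: "x = word_class w" by (auto simp: carrier_trefoil_group)
    have "word_class (inv_word w) \<otimes>\<^bsub>G\<^esub> x = \<one>\<^bsub>G\<^esub>"
      using word_eq_inv_word_append by (simp add: w one_word_class word_class_eq_iff)
    then show ?thesis using word_class_in_carrier by blast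
  qed
qed (auto simp: carrier_trefoil_group one_word_class)

interpretation G: group G
  by (rule group_trefoil_group)

lemma inv_word_class: "inv\<^bsub>G\<^esub> (word_class w) = word_class (inv_word w)"
  using G.inv_equality[of "word_class (inv_word w)" "word_class w"] word_eq_inv_word_append
  by (simp add: one_word_class word_class_eq_iff)

lemma word_class_cancel: "word_class (u @ l # inv_letter l # v) = word_class (u @ v)"
  using word_eq.cancel[of u l v] by (simp add: word_class_eq_iff)

lemma word_class_relator: "word_class (u @ relator @ v) = word_class (u @ v)"
  unfolding word_class_eq_iff by (rule word_eq.rel)

datatype mat2 = M2 int int int int

instantiation mat2 :: ring_1
begin

fun plus_mat2 :: "mat2 \<Rightarrow> mat2 \<Rightarrow> mat2" where
  "M2 a b c d + M2 a' b' c' d' = M2 (a + a') (b + b') (c + c') (d + d')"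

fun minus_mat2 :: "mat2 \<Rightarrow> mat2 \<Rightarrow> mat2" where
  "M2 a b c d - M2 a' b' c' d' = M2 (a - a') (b - b') (c - c') (d - d')"

fun uminus_mat2 :: "mat2 \<Rightarrow> mat2" where
  "- M2 a b c d = M2 (- a) (- b) (- c) (- d)"

fun times_mat2 :: "mat2 \<Rightarrow> mat2 \<Rightarrow> mat2" where
  "M2 a b c d * M2 a' b' c' d' = M2 (a * a' + b * c') (a * b' + b * d') (c * a' + d * c') (c * b' + d * d')"

definition zero_mat2 :: mat2 where "0 = M2 0 0 0 0"

definition one_mat2 :: mat2 where "1 = M2 1 0 0 1"

instance
proof
  fix x y z :: mat2
  show "x * y * z = x * (y * z)" by (cases x; cases y; cases z) (simp add: algebra_simps)
  show "x + y + z = x + (y + z)" by (cases x; cases y; cases z) simp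
  show "x + y = y + x" by (cases x; cases y) simp
  show "0 + x = x" by (cases x) (simp add: zero_mat2_def)
  show "- x + x = 0" by (cases x) (simp add: zero_mat2_def)
  show "x - y = x + - y" by (cases x; cases y) simp
  show "1 * x = x" by (cases x) (simp add: one_mat2_def)
  show "x * 1 = x" by (cases x) (simp add: one_mat2_def)
  show "(x + y) * z = x * z + y * z" by (cases x; cases y; cases z) (simp add: algebra_simps)
  show "x * (y + z) = x * y + x * z" by (cases x; cases y; cases z) (simp add: algebra_simps)
  show "(0::mat2) \<noteq> 1" by (simp add: zero_mat2_def one_mat2_def)
qed

end

fun trace :: "mat2 \<Rightarrow> int" where
  "trace (M2 a b c d) = a + d"

fun det :: "mat2 \<Rightarrow> int" where
  "det (M2 a b c d) = a * d - b * c"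

fun adj :: "mat2 \<Rightarrow> mat2" where
  "adj (M2 a b c d) = M2 d (- b) (- c) a"

definition scalar_mat :: "int \<Rightarrow> mat2" where
  "scalar_mat k = M2 k 0 0 k"

lemma one_mat2_eq: "(1::mat2) = M2 1 0 0 1"
  by (simp add: one_mat2_def)

lemma zero_mat2_eq: "(0::mat2) = M2 0 0 0 0"
  by (simp add: zero_mat2_def)

lemma det_mult: "det (x * y) = det x * det y"
  by (cases x; cases y) (simp add: algebra_simps)

lemma adj_mult: "adj (x * y) = adj y * adj x"
  by (cases x; cases y) (simp add: algebra_simps)

lemma trace_mult_commute: "trace (x * y) = trace (y * x)"
  by (cases x; cases y) (simp add: algebra_simps)

lemma mult_adj: "x * adj x = scalar_mat (det x)"
  by (cases x) (simp add: scalar_mat_def algebra_simps)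

lemma adj_mult_self: "adj x * x = scalar_mat (det x)"
  by (cases x) (simp add: scalar_mat_def algebra_simps)

lemma adj_eq_trace_minus: "adj x = scalar_mat (trace x) - x"
  by (cases x) (simp add: scalar_mat_def)

lemma cayley_hamilton: "x * x = scalar_mat (trace x) * x - scalar_mat (det x)"
  by (cases x) (simp add: scalar_mat_def algebra_simps)

lemma scalar_mat_one [simp]: "scalar_mat 1 = 1"
  by (simp add: scalar_mat_def one_mat2_eq)

lemma det_adj [simp]: "det (adj x) = det x"
  by (cases x) simp

lemma trace_adj [simp]: "trace (adj x) = trace x"
  by (cases x) simp

lemma trace_uminus [simp]: "trace (- x) = - trace x"
  by (cases x) simp

lemma trace_conj: "det x = 1 \<Longrightarrow> trace (x * y * adj x) = trace y"
  using trace_mult_commute[of "x * y" "adj x"] by (simp add: mult.assoc[symmetric] adj_mult_self)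

section \<open>The representation \<open>c \<mapsto> S\<close>, \<open>d \<mapsto> U\<close> into \<open>SL(2,\<int>)\<close>\<close>

definition S_mat :: mat2 where "S_mat = M2 0 (-1) 1 0"

definition U_mat :: mat2 where "U_mat = M2 0 (-1) 1 1"

fun letter_mat :: "letter \<Rightarrow> mat2" where
  "letter_mat (False, Cg) = S_mat"
| "letter_mat (True, Cg) = adj S_mat"
| "letter_mat (False, Dg) = U_mat"
| "letter_mat (True, Dg) = adj U_mat"

definition word_mat :: "word \<Rightarrow> mat2" where
  "word_mat w = prod_list (map letter_mat w)"

lemma word_mat_Nil [simp]: "word_mat [] = 1"
  and word_mat_Cons [simp]: "word_mat (l # w) = letter_mat l * word_mat w"
  and word_mat_append [simp]: "word_mat (u @ v) = word_mat u * word_mat v"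
  by (simp_all add: word_mat_def)

lemma adj_letter_mat: "adj (letter_mat l) = letter_mat (inv_letter l)"
  by (cases l rule: letter_mat.cases) (auto simp: S_mat_def U_mat_def)

lemma det_word_mat [simp]: "det (word_mat w) = 1"
proof (induction w)
  case (Cons l w)
  have "det (letter_mat l) = 1" by (cases l rule: letter_mat.cases) (auto simp: S_mat_def U_mat_def)
  then show ?case using Cons by (simp add: det_mult)
qed (simp add: one_mat2_eq)

lemma word_mat_inv_word: "word_mat (inv_word w) = adj (word_mat w)"
proof (induction w)
  case (Cons l w)
  then show ?case by (simp add: inv_word_def adj_mult adj_letter_mat[symmetric])
qed (simp add: inv_word_def one_mat2_eq)

lemma word_mat_respects_word_eq: "(u, v) \<in> word_eq \<Longrightarrow> word_mat u = word_mat v"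
proof (induction rule: word_eq.induct)
  case (cancel u l v)
  have "letter_mat l * letter_mat (inv_letter l) = 1"
    by (cases l rule: letter_mat.cases) (auto simp: S_mat_def U_mat_def one_mat2_eq)
  then show ?case by (simp add: mult.assoc[symmetric])
next
  case (rel u v)
  have "word_mat relator = 1" by (simp add: relator_def S_mat_def U_mat_def one_mat2_eq)
  then show ?case by simp
qed auto

definition rep :: "word set \<Rightarrow> mat2" where
  "rep g = word_mat (SOME w. g = word_class w)"

lemma rep_word_class [simp]: "rep (word_class w) = word_mat w"
proof -
  have "word_class w = word_class (SOME w'. word_class w = word_class w')" by (rule someI) simp
  then show ?thesis unfolding rep_def word_class_eq_iff by (metis word_mat_respects_word_eq)
qed

lemma rep_mult: "g \<in> carrier G \<Longrightarrow> h \<in> carrier G \<Longrightarrow> rep (g \<otimes>\<^bsub>G\<^esub> h) = rep g * rep h"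
  by (auto simp: carrier_trefoil_group)

lemma rep_inv: "g \<in> carrier G \<Longrightarrow> rep (inv\<^bsub>G\<^esub> g) = adj (rep g)"
  by (auto simp: carrier_trefoil_group inv_word_class word_mat_inv_word)

lemma rep_one: "rep \<one>\<^bsub>G\<^esub> = 1"
  by (simp add: one_word_class)

lemma det_rep: "g \<in> carrier G \<Longrightarrow> det (rep g) = 1"
  by (auto simp: carrier_trefoil_group)

lemma trace_rep_conj:
  "x \<in> carrier G \<Longrightarrow> g \<in> carrier G \<Longrightarrow> trace (rep (x \<otimes>\<^bsub>G\<^esub> g \<otimes>\<^bsub>G\<^esub> inv\<^bsub>G\<^esub> x)) = trace (rep g)"
  by (simp add: rep_mult rep_inv trace_conj det_rep)

fun mat_dvd :: "int \<Rightarrow> mat2 \<Rightarrow> bool" where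
  "mat_dvd m (M2 a b c d) \<longleftrightarrow> m dvd a \<and> m dvd b \<and> m dvd c \<and> m dvd d"

definition mat_cong :: "int \<Rightarrow> mat2 \<Rightarrow> mat2 \<Rightarrow> bool" where
  "mat_cong m M N \<longleftrightarrow> mat_dvd m (M - N)"

lemma mat_dvd_add: "mat_dvd m M \<Longrightarrow> mat_dvd m N \<Longrightarrow> mat_dvd m (M + N)"
  by (cases M; cases N) auto

lemma mat_dvd_uminus: "mat_dvd m M \<Longrightarrow> mat_dvd m (- M)"
  by (cases M) auto

lemma mat_dvd_mult_left: "mat_dvd m M \<Longrightarrow> mat_dvd m (N * M)"
  by (cases M; cases N) auto

lemma mat_dvd_mult_right: "mat_dvd m M \<Longrightarrow> mat_dvd m (M * N)"
  by (cases M; cases N) auto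

lemma mat_dvd_scalar_mat_mult: "m dvd k \<Longrightarrow> mat_dvd m (scalar_mat k * M)"
  by (cases M) (simp add: scalar_mat_def)

lemma mat_cong_refl [simp]: "mat_cong m M M"
  by (simp add: mat_cong_def zero_mat2_eq)

lemma mat_cong_sym: "mat_cong m M N \<Longrightarrow> mat_cong m N M"
  unfolding mat_cong_def by (metis mat_dvd_uminus minus_diff_eq)

lemma mat_cong_trans [trans]: "mat_cong m M N \<Longrightarrow> mat_cong m N P \<Longrightarrow> mat_cong m M P"
  unfolding mat_cong_def by (metis mat_dvd_add diff_add_eq_diff_diff_swap diff_diff_eq2 diff_add_cancel)

lemma mat_cong_mult: "mat_cong m M M' \<Longrightarrow> mat_cong m N N' \<Longrightarrow> mat_cong m (M * N) (M' * N')"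
proof -
  assume "mat_cong m M M'" "mat_cong m N N'"
  moreover have "M * N - M' * N' = (M - M') * N + M' * (N - N')"
    by (simp add: algebra_simps)
  ultimately show ?thesis
    unfolding mat_cong_def by (metis mat_dvd_add mat_dvd_mult_left mat_dvd_mult_right)
qed

lemma mat_cong_mult_left: "mat_cong m N N' \<Longrightarrow> mat_cong m (M * N) (M * N')"
  by (rule mat_cong_mult) auto

lemma mat_cong_mult_right: "mat_cong m M M' \<Longrightarrow> mat_cong m (M * N) (M' * N)"
  by (rule mat_cong_mult) auto

lemma mat_cong_uminus: "mat_cong m M N \<Longrightarrow> mat_cong m (- M) (- N)"
  unfolding mat_cong_def by (metis mat_dvd_uminus minus_diff_minus minus_diff_eq)

lemma mat_cong_adj: "m dvd trace M \<Longrightarrow> mat_cong m (adj M) (- M)"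
  unfolding mat_cong_def adj_eq_trace_minus by (cases M) (simp add: scalar_mat_def add.commute)

lemma mat_cong_square: "m dvd trace M \<Longrightarrow> det M = 1 \<Longrightarrow> mat_cong m (M * M) (- 1)"
  unfolding mat_cong_def cayley_hamilton by (simp add: mat_dvd_scalar_mat_mult)

section \<open>Generating \<open>S\<close> and \<open>U\<close> forces trace \<open>\<plusminus>2\<close>\<close>

inductive_set submonoid_generated :: "'a::monoid_mult set \<Rightarrow> 'a set" for M where
  one: "1 \<in> submonoid_generated M"
| incl: "x \<in> M \<Longrightarrow> x \<in> submonoid_generated M"
| mult: "x \<in> submonoid_generated M \<Longrightarrow> y \<in> submonoid_generated M \<Longrightarrow> x * y \<in> submonoid_generated M"

lemma submonoid_generated_minimal:
  assumes "1 \<in> Q" and "M \<subseteq> Q" and "\<And>x y. x \<in> Q \<Longrightarrow> y \<in> Q \<Longrightarrow> x * y \<in> Q"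
  shows "submonoid_generated M \<subseteq> Q"
proof
  show "x \<in> Q" if "x \<in> submonoid_generated M" for x
    using that by induction (use assms in auto)
qed

lemma mat_cong_2_if_odd_trace:
  assumes "det M = 1" and "odd (trace M)"
  shows "mat_cong 2 M U_mat \<or> mat_cong 2 M (adj U_mat)"
proof (cases M)
  case (M2 a b c d)
  with assms have det: "a * d - b * c = 1" and odd: "odd (a + d)" by auto
  then have "even (a * d)" by auto
  with det have "odd (b * c)" by (metis even_add diff_add_cancel odd_one)
  then have "odd b" "odd c" by auto
  show ?thesis
  proof (cases "even a")
    case True
    with odd have "odd d" by auto
    with True \<open>odd b\<close> \<open>odd c\<close> M2 show ?thesis by (auto simp: mat_cong_def U_mat_def)
  next
    case False
    with odd have "even d" by auto
    with False \<open>odd b\<close> \<open>odd c\<close> M2 show ?thesis by (auto simp: mat_cong_def U_mat_def)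
  qed
qed

lemma S_mat_not_generated_if_odd_trace:
  assumes "det A = 1" "det B = 1" "trace B = trace A" "odd (trace A)"
  shows "S_mat \<notin> submonoid_generated {A, adj A, B, adj B}"
proof -
  \<comment> \<open>\<open>R\<close> is the cyclic group generated by \<open>U\<close> modulo 2\<close>
  define R where "R = {1, U_mat, adj U_mat}"
  define Q where "Q = {M. \<exists>N\<in>R. mat_cong 2 M N}"
  have R_mult: "\<exists>P\<in>R. mat_cong 2 (M * N) P" if "M \<in> R" "N \<in> R" for M N
    using that by (auto simp: R_def U_mat_def one_mat2_eq mat_cong_def zero_mat2_eq)
  have "submonoid_generated {A, adj A, B, adj B} \<subseteq> Q"
  proof (rule submonoid_generated_minimal)
    show "1 \<in> Q" by (auto simp: Q_def R_def)
    show "{A, adj A, B, adj B} \<subseteq> Q"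
    proof
      fix M assume "M \<in> {A, adj A, B, adj B}"
      then have "det M = 1" "odd (trace M)" using assms by auto
      then have "mat_cong 2 M U_mat \<or> mat_cong 2 M (adj U_mat)" by (rule mat_cong_2_if_odd_trace)
      then show "M \<in> Q" by (auto simp: Q_def R_def)
    qed
    show "M * N \<in> Q" if M: "M \<in> Q" and N: "N \<in> Q" for M N
    proof -
      from M N obtain M' N' where "M' \<in> R" "mat_cong 2 M M'" "N' \<in> R" "mat_cong 2 N N'"
        by (auto simp: Q_def)
      moreover obtain P where "P \<in> R" "mat_cong 2 (M' * N') P" using R_mult \<open>M' \<in> R\<close> \<open>N' \<in> R\<close> by blast
      ultimately have "mat_cong 2 (M * N) P" using mat_cong_mult mat_cong_trans by blast
      with \<open>P \<in> R\<close> show ?thesis by (auto simp: Q_def)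
    qed
  qed
  moreover have "S_mat \<notin> Q"
    by (auto simp: Q_def R_def S_mat_def U_mat_def one_mat2_eq mat_cong_def)
  ultimately show ?thesis by blast
qed

definition sign_mat :: "bool \<Rightarrow> mat2" where
  "sign_mat s = (if s then -1 else 1)"

text \<open>If \<open>m\<close> divides the common trace of \<open>A\<close> and \<open>B\<close>, then modulo \<open>m\<close> we have \<open>A\<^sup>2 = -1\<close> and
  \<open>A C = C\<^sup>-\<^sup>1 A\<close> for \<open>C = A B\<close>, so the monoid generated by \<open>A\<^sup>\<plusminus>\<^sup>1, B\<^sup>\<plusminus>\<^sup>1\<close> reduces into the
  dihedral-type set of matrices \<open>\<plusminus>C\<^sup>a C\<^sup>-\<^sup>b A\<^sup>r\<close>. Its elements not squaring to \<open>-1\<close> commute.\<close>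

locale trace_divisor =
  fixes A B :: mat2 and m :: int
  assumes det_A: "det A = 1" and det_B: "det B = 1" and trace_B: "trace B = trace A"
    and dvd_trace: "m dvd trace A"
begin

definition C :: mat2 where "C = A * B"

definition D :: mat2 where "D = adj C"

lemma C_mult_D: "C * D = 1"
  unfolding D_def by (simp add: mult_adj C_def det_mult det_A det_B)

lemma D_mult_C: "D * C = 1"
  unfolding D_def by (simp add: adj_mult_self C_def det_mult det_A det_B)

lemma powers_commute: "D ^ b * C ^ a = C ^ a * D ^ b"
proof -
  have "D * C ^ a = C ^ a * D" using C_mult_D D_mult_C by (metis power_commuting_commutes)
  then show ?thesis by (metis power_commuting_commutes)
qed

lemma mult_powers: "(C ^ a * D ^ b) * (C ^ a' * D ^ b') = C ^ (a + a') * D ^ (b + b')"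
proof -
  have "(C ^ a * D ^ b) * (C ^ a' * D ^ b') = C ^ a * (D ^ b * C ^ a') * D ^ b'"
    by (simp add: mult.assoc)
  then show ?thesis by (simp add: powers_commute power_add mult.assoc)
qed

lemma powers_cancel: "C ^ k * D ^ k = 1"
  using left_right_inverse_power[OF C_mult_D] .

lemma A_square: "mat_cong m (A * A) (- 1)"
  using mat_cong_square[OF dvd_trace det_A] .

lemma adj_A: "mat_cong m (adj A) (- A)"
  using mat_cong_adj[OF dvd_trace] .

lemma adj_B: "mat_cong m (adj B) (- B)"
  using mat_cong_adj[of m B] dvd_trace trace_B by simp

lemma A_mult_C: "mat_cong m (A * C) (D * A)"
proof -
  have "A * C = A * A * B" by (simp add: C_def mult.assoc)
  also have "mat_cong m \<dots> (- 1 * B)" by (rule mat_cong_mult_right[OF A_square])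
  also have "- 1 * B = - B" by simp
  also have "mat_cong m \<dots> (adj B)" by (rule mat_cong_sym[OF adj_B])
  also have "adj B = D * A" by (simp add: D_def C_def adj_mult mult.assoc adj_mult_self det_A)
  finally show ?thesis .
qed

lemma A_mult_D: "mat_cong m (A * D) (C * A)"
proof -
  have "A * D = A * adj B * adj A" by (simp add: D_def C_def adj_mult mult.assoc)
  also have "mat_cong m \<dots> (A * (- B) * (- A))"
    by (intro mat_cong_mult mat_cong_mult_left adj_A adj_B)
  also have "A * (- B) * (- A) = C * A" by (simp add: C_def)
  finally show ?thesis .
qed

lemma A_mult_C_power: "mat_cong m (A * C ^ a) (D ^ a * A)"
proof (induction a)
  case (Suc a)
  have "A * C ^ Suc a = (A * C ^ a) * C" by (simp only: power_Suc2 mult.assoc)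
  also have "mat_cong m \<dots> (D ^ a * A * C)" by (rule mat_cong_mult_right[OF Suc.IH])
  also have "D ^ a * A * C = D ^ a * (A * C)" by (simp only: mult.assoc)
  also have "mat_cong m \<dots> (D ^ a * (D * A))" by (rule mat_cong_mult_left[OF A_mult_C])
  also have "D ^ a * (D * A) = D ^ Suc a * A" by (simp only: power_Suc2 mult.assoc)
  finally show ?case .
qed simp

lemma A_mult_D_power: "mat_cong m (A * D ^ a) (C ^ a * A)"
proof (induction a)
  case (Suc a)
  have "A * D ^ Suc a = (A * D ^ a) * D" by (simp only: power_Suc2 mult.assoc)
  also have "mat_cong m \<dots> (C ^ a * A * D)" by (rule mat_cong_mult_right[OF Suc.IH])
  also have "C ^ a * A * D = C ^ a * (A * D)" by (simp only: mult.assoc)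
  also have "mat_cong m \<dots> (C ^ a * (C * A))" by (rule mat_cong_mult_left[OF A_mult_D])
  also have "C ^ a * (C * A) = C ^ Suc a * A" by (simp only: power_Suc2 mult.assoc)
  finally show ?case .
qed simp

lemma A_mult_powers: "mat_cong m (A * (C ^ a * D ^ b)) (C ^ b * D ^ a * A)"
proof -
  have "A * (C ^ a * D ^ b) = A * C ^ a * D ^ b" by (simp only: mult.assoc)
  also have "mat_cong m \<dots> (D ^ a * A * D ^ b)" by (rule mat_cong_mult_right[OF A_mult_C_power])
  also have "D ^ a * A * D ^ b = D ^ a * (A * D ^ b)" by (simp only: mult.assoc)
  also have "mat_cong m \<dots> (D ^ a * (C ^ b * A))" by (rule mat_cong_mult_left[OF A_mult_D_power])
  also have "D ^ a * (C ^ b * A) = C ^ b * D ^ a * A" by (simp only: powers_commute mult.assoc[symmetric])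
  finally show ?thesis .
qed

definition dihedral :: "nat \<Rightarrow> nat \<Rightarrow> bool \<Rightarrow> bool \<Rightarrow> mat2" where
  "dihedral a b s r = sign_mat s * (C ^ a * D ^ b) * (if r then A else 1)"

definition dihedral_mod :: "mat2 \<Rightarrow> bool" where
  "dihedral_mod M \<longleftrightarrow> (\<exists>a b s r. mat_cong m M (dihedral a b s r))"

lemma dihedral_mod_dihedral: "dihedral_mod (dihedral a b s r)"
  unfolding dihedral_mod_def by (blast intro: mat_cong_refl)

lemma dihedral_mod_cong: "mat_cong m M N \<Longrightarrow> dihedral_mod N \<Longrightarrow> dihedral_mod M"
  unfolding dihedral_mod_def using mat_cong_trans by blast

lemma dihedral_mult: "dihedral_mod (dihedral a b s r * dihedral a' b' s' r')"
proof (cases r)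
  case False
  have "dihedral a b s r * dihedral a' b' s' r' = dihedral (a + a') (b + b') (s \<noteq> s') r'"
    unfolding dihedral_def mult_powers[symmetric] using False
    by (cases s; cases s') (simp_all add: sign_mat_def mult.assoc)
  then show ?thesis using dihedral_mod_dihedral by simp
next
  case True
  let ?s = "sign_mat (s \<noteq> s')" and ?A' = "if r' then A else 1"
  have "dihedral a b s r * dihedral a' b' s' r' = ?s * (C ^ a * D ^ b) * ((A * (C ^ a' * D ^ b')) * ?A')"
    unfolding dihedral_def using True by (cases s; cases s') (simp_all add: sign_mat_def mult.assoc)
  also have "mat_cong m \<dots> (?s * (C ^ a * D ^ b) * ((C ^ b' * D ^ a' * A) * ?A'))"
    by (intro mat_cong_mult_left mat_cong_mult_right A_mult_powers)
  also have "?s * (C ^ a * D ^ b) * ((C ^ b' * D ^ a' * A) * ?A')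
      = ?s * (C ^ (a + b') * D ^ (b + a')) * (A * ?A')"
    unfolding mult_powers[symmetric] by (simp only: mult.assoc)
  finally have prod: "mat_cong m (dihedral a b s r * dihedral a' b' s' r')
      (?s * (C ^ (a + b') * D ^ (b + a')) * (A * ?A'))" .
  show ?thesis
  proof (cases r')
    case False
    then have "?s * (C ^ (a + b') * D ^ (b + a')) * (A * ?A') = dihedral (a + b') (b + a') (s \<noteq> s') True"
      by (simp add: dihedral_def)
    then show ?thesis using prod dihedral_mod_cong dihedral_mod_dihedral by metis
  next
    case True
    have "mat_cong m (?s * (C ^ (a + b') * D ^ (b + a')) * (A * ?A'))
        (?s * (C ^ (a + b') * D ^ (b + a')) * (- 1))"
      using True mat_cong_mult_left[OF A_square] by simp
    also have "?s * (C ^ (a + b') * D ^ (b + a')) * (- 1) = dihedral (a + b') (b + a') (s = s') False"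
      by (simp add: dihedral_def sign_mat_def)
    finally show ?thesis using prod mat_cong_trans dihedral_mod_cong dihedral_mod_dihedral by metis
  qed
qed

lemma dihedral_mod_mult:
  assumes "dihedral_mod M" and "dihedral_mod N"
  shows "dihedral_mod (M * N)"
proof -
  obtain a b s r a' b' s' r'
    where "mat_cong m M (dihedral a b s r)" and "mat_cong m N (dihedral a' b' s' r')"
    using assms unfolding dihedral_mod_def by blast
  then have "mat_cong m (M * N) (dihedral a b s r * dihedral a' b' s' r')"
    by (rule mat_cong_mult)
  then show ?thesis using dihedral_mult dihedral_mod_cong by blast
qed

lemma B_cong: "mat_cong m B (- (D * A))"
proof -
  have "B = adj A * C" by (simp add: C_def mult.assoc[symmetric] adj_mult_self det_A)
  also have "mat_cong m \<dots> (- A * C)" by (rule mat_cong_mult_right[OF adj_A])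
  also have "- A * C = - (A * C)" by simp
  also have "mat_cong m \<dots> (- (D * A))" by (rule mat_cong_uminus[OF A_mult_C])
  finally show ?thesis .
qed

lemma generated_dihedral_mod:
  assumes "M \<in> submonoid_generated {A, adj A, B, adj B}"
  shows "dihedral_mod M"
proof -
  have "mat_cong m (adj B) (D * A)"
    using mat_cong_trans[OF adj_B mat_cong_uminus[OF B_cong]] by simp
  then have "mat_cong m 1 (dihedral 0 0 False False)" "mat_cong m A (dihedral 0 0 False True)"
    "mat_cong m (adj A) (dihedral 0 0 True True)" "mat_cong m B (dihedral 0 1 True True)"
    "mat_cong m (adj B) (dihedral 0 1 False True)"
    using adj_A B_cong by (simp_all add: dihedral_def sign_mat_def)
  then have "1 \<in> Collect dihedral_mod" "{A, adj A, B, adj B} \<subseteq> Collect dihedral_mod"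
    unfolding dihedral_mod_def by blast+
  then have "submonoid_generated {A, adj A, B, adj B} \<subseteq> Collect dihedral_mod"
    by (intro submonoid_generated_minimal) (auto intro: dihedral_mod_mult)
  then show ?thesis using assms by blast
qed

lemma dihedral_mod_square:
  assumes "dihedral_mod M"
  shows "mat_cong m (M * M) (- 1) \<or> (\<exists>a b s. mat_cong m M (sign_mat s * (C ^ a * D ^ b)))"
proof -
  obtain a b s r where M: "mat_cong m M (dihedral a b s r)"
    using assms dihedral_mod_def by blast
  show ?thesis
  proof (cases r)
    case False
    then show ?thesis using M by (auto simp: dihedral_def)
  next
    case True
    let ?P = "C ^ a * D ^ b"
    have "dihedral a b s r * dihedral a b s r = ?P * ((A * ?P) * A)"
      using True by (cases s) (simp_all add: dihedral_def sign_mat_def mult.assoc)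
    then have "mat_cong m (M * M) (?P * ((A * ?P) * A))"
      using mat_cong_mult[OF M M] by simp
    moreover have "mat_cong m (?P * ((A * ?P) * A)) (?P * ((C ^ b * D ^ a * A) * A))"
      by (intro mat_cong_mult_left mat_cong_mult_right A_mult_powers)
    moreover have "?P * ((C ^ b * D ^ a * A) * A) = A * A"
    proof -
      have "?P * ((C ^ b * D ^ a * A) * A) = (C ^ (a + b) * D ^ (b + a)) * (A * A)"
        by (simp only: mult_powers[symmetric] mult.assoc)
      then show ?thesis using powers_cancel[of "a + b"] by (simp add: add.commute)
    qed
    ultimately have "mat_cong m (M * M) (A * A)" using mat_cong_trans by metis
    then show ?thesis using A_square mat_cong_trans by blast
  qed
qed

lemma U_and_conj_not_both_generated:
  assumes "3 \<le> m"
    and "U_mat \<in> submonoid_generated {A, adj A, B, adj B}"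
    and "S_mat * U_mat * adj S_mat \<in> submonoid_generated {A, adj A, B, adj B}"
  shows False
proof -
  let ?V = "S_mat * U_mat * adj S_mat"
  have V: "?V = M2 1 (-1) 1 0" by (simp add: S_mat_def U_mat_def)
  have not_dvd_one: "\<not> m dvd 1" and not_dvd_two: "\<not> m dvd 2"
    using assms(1) zdvd_imp_le[of m 1] zdvd_imp_le[of m 2] by auto
  have "\<not> mat_cong m (U_mat * U_mat) (- 1)" "\<not> mat_cong m (?V * ?V) (- 1)"
    using not_dvd_one unfolding V by (simp_all add: U_mat_def mat_cong_def one_mat2_eq)
  moreover have "dihedral_mod U_mat" "dihedral_mod ?V"
    using generated_dihedral_mod assms(2,3) by blast+
  ultimately obtain a b s a' b' s'
    where U: "mat_cong m U_mat (sign_mat s * (C ^ a * D ^ b))"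
      and V': "mat_cong m ?V (sign_mat s' * (C ^ a' * D ^ b'))"
    using dihedral_mod_square by blast
  have "sign_mat s * (C ^ a * D ^ b) * (sign_mat s' * (C ^ a' * D ^ b'))
      = sign_mat s' * (C ^ a' * D ^ b') * (sign_mat s * (C ^ a * D ^ b))"
    by (simp add: sign_mat_def mult_powers add.commute)
  then have "mat_cong m (U_mat * ?V) (?V * U_mat)"
    using mat_cong_mult[OF U V'] mat_cong_mult[OF V' U] mat_cong_sym mat_cong_trans by metis
  then show False
    using not_dvd_two unfolding V by (simp add: U_mat_def mat_cong_def)
qed

end

theorem trace_eq_pm2_if_generated:
  assumes "det A = 1" "det B = 1" "trace B = trace A"
    and "S_mat \<in> submonoid_generated {A, adj A, B, adj B}"
    and "U_mat \<in> submonoid_generated {A, adj A, B, adj B}"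
    and "S_mat * U_mat * adj S_mat \<in> submonoid_generated {A, adj A, B, adj B}"
  shows "trace A = 2 \<or> trace A = -2"
proof (rule ccontr)
  assume not_pm2: "\<not> (trace A = 2 \<or> trace A = -2)"
  show False
  proof (cases "odd (trace A)")
    case True
    then show False using S_mat_not_generated_if_odd_trace assms by blast
  next
    case False
    define m where "m = (if trace A = 0 then 3 else \<bar>trace A\<bar>)"
    have "m dvd trace A" "3 \<le> m" using False not_pm2 by (auto simp: m_def)
    then show False
      using trace_divisor.U_and_conj_not_both_generated[of A B m] assms by (auto simp: trace_divisor_def)
  qed
qed

lemma word_class_cc_ddd: "word_class [lc, lc] = word_class [ld, ld, ld]"
proof -
  have "word_class [ld, ld, ld] = word_class (relator @ [ld, ld, ld])"
    using word_class_relator[of "[]" "[ld, ld, ld]"] by simp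
  also have "\<dots> = word_class [lc, lc, lD, lD, lD, ld, ld, ld]" by (simp add: relator_def)
  also have "\<dots> = word_class [lc, lc]"
    using word_class_cancel[of "[lc, lc, lD, lD]" lD "[ld, ld]"]
      word_class_cancel[of "[lc, lc, lD]" lD "[ld]"] word_class_cancel[of "[lc, lc]" lD "[]"]
    by simp
  finally show ?thesis ..
qed

lemma word_class_dd: "word_class [ld, ld] = word_class [lc, lc, lD]"
  using word_class_cc_ddd word_class_cancel[of "[ld, ld]" ld "[]"]
    mult_word_class[of "[lc, lc]" "[lD]"] mult_word_class[of "[ld, ld, ld]" "[lD]"]
  by simp

lemma word_class_DD: "word_class [lD, lD] = word_class [lC, lC, ld]"
proof -
  have "word_class [lC, lC, ld] = word_class ([lC, lC] @ [ld, ld, ld] @ [lD, lD])"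
    using word_class_cancel[of "[lC, lC, ld, ld]" ld "[lD]"] word_class_cancel[of "[lC, lC, ld]" ld "[]"]
    by simp
  also have "\<dots> = word_class ([lC, lC] @ [lc, lc] @ [lD, lD])"
    using word_class_cc_ddd by (metis mult_word_class)
  also have "\<dots> = word_class [lD, lD]"
    using word_class_cancel[of "[lC]" lC "[lc, lD, lD]"] word_class_cancel[of "[]" lC "[lD, lD]"] by simp
  finally show ?thesis ..
qed

definition c_square :: "word set" where
  "c_square = word_class [lc, lc]"

lemma c_square_in_carrier [simp]: "c_square \<in> carrier G"
  by (simp add: c_square_def)

lemma inv_c_square: "inv\<^bsub>G\<^esub> c_square = word_class [lC, lC]"
  by (simp add: c_square_def inv_word_class inv_word_def)

lemma c_square_commute_letter:
  "c_square \<otimes>\<^bsub>G\<^esub> word_class [l] = word_class [l] \<otimes>\<^bsub>G\<^esub> c_square"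
proof (cases l rule: letter_mat.cases)
  case 2
  then show ?thesis
    using word_class_cancel[of "[lc]" lc "[]"] word_class_cancel[of "[]" lC "[lc]"]
    by (simp add: c_square_def)
next
  case 3
  then show ?thesis by (simp add: c_square_def word_class_cc_ddd)
next
  case 4
  then show ?thesis
    using word_class_cancel[of "[ld, ld]" ld "[]"] word_class_cancel[of "[]" lD "[ld, ld]"]
    by (simp add: c_square_def word_class_cc_ddd)
qed (simp add: c_square_def)

lemma c_square_central: "g \<in> carrier G \<Longrightarrow> c_square \<otimes>\<^bsub>G\<^esub> g = g \<otimes>\<^bsub>G\<^esub> c_square"
proof -
  have "c_square \<otimes>\<^bsub>G\<^esub> word_class w = word_class w \<otimes>\<^bsub>G\<^esub> c_square" for w
  proof (induction w)
    case (Cons l w)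
    have "c_square \<otimes>\<^bsub>G\<^esub> word_class (l # w) = (c_square \<otimes>\<^bsub>G\<^esub> word_class [l]) \<otimes>\<^bsub>G\<^esub> word_class w"
      by (simp add: G.m_assoc)
    also have "\<dots> = word_class [l] \<otimes>\<^bsub>G\<^esub> (c_square \<otimes>\<^bsub>G\<^esub> word_class w)"
      by (simp add: c_square_commute_letter G.m_assoc)
    also have "\<dots> = word_class (l # w) \<otimes>\<^bsub>G\<^esub> c_square"
      by (simp add: Cons G.m_assoc[symmetric])
    finally show ?case .
  qed (simp add: c_square_def)
  then show "g \<in> carrier G \<Longrightarrow> ?thesis" by (auto simp: carrier_trefoil_group)
qed

definition central_subgroup :: "word set set" where
  "central_subgroup = generate G {c_square}"

lemma subgroup_central_subgroup: "subgroup central_subgroup G"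
  unfolding central_subgroup_def by (rule G.generate_is_subgroup) simp

lemma central_subgroup_in_carrier: "p \<in> central_subgroup \<Longrightarrow> p \<in> carrier G"
  using subgroup.mem_carrier[OF subgroup_central_subgroup] .

lemma c_square_in_central_subgroup: "c_square \<in> central_subgroup"
  unfolding central_subgroup_def by (rule generate.incl) simp

lemma inv_c_square_in_central_subgroup: "inv\<^bsub>G\<^esub> c_square \<in> central_subgroup"
  unfolding central_subgroup_def by (rule generate.inv) simp

lemma central_subgroup_central:
  assumes "p \<in> central_subgroup" and "g \<in> carrier G"
  shows "p \<otimes>\<^bsub>G\<^esub> g = g \<otimes>\<^bsub>G\<^esub> p"
  using assms(1) unfolding central_subgroup_def
proof (induction rule: generate.induct)
  case (inv h)
  then have h: "h = c_square" by simp
  have "inv\<^bsub>G\<^esub> h \<otimes>\<^bsub>G\<^esub> g = inv\<^bsub>G\<^esub> h \<otimes>\<^bsub>G\<^esub> (g \<otimes>\<^bsub>G\<^esub> h) \<otimes>\<^bsub>G\<^esub> inv\<^bsub>G\<^esub> h"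
    using h assms(2) by (simp add: G.m_assoc)
  also have "\<dots> = inv\<^bsub>G\<^esub> h \<otimes>\<^bsub>G\<^esub> (h \<otimes>\<^bsub>G\<^esub> g) \<otimes>\<^bsub>G\<^esub> inv\<^bsub>G\<^esub> h"
    using h c_square_central[OF assms(2)] by simp
  also have "\<dots> = g \<otimes>\<^bsub>G\<^esub> inv\<^bsub>G\<^esub> h"
    using h assms(2) by (simp add: G.m_assoc[symmetric])
  finally show ?case .
next
  case (eng h1 h2)
  have "h1 \<in> carrier G" "h2 \<in> carrier G"
    using eng.hyps G.generate_in_carrier[of "{c_square}"] by auto
  then have "h1 \<otimes>\<^bsub>G\<^esub> h2 \<otimes>\<^bsub>G\<^esub> g = h1 \<otimes>\<^bsub>G\<^esub> (g \<otimes>\<^bsub>G\<^esub> h2)"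
    using eng.IH(2) assms(2) by (simp add: G.m_assoc)
  also have "\<dots> = g \<otimes>\<^bsub>G\<^esub> (h1 \<otimes>\<^bsub>G\<^esub> h2)"
    using eng.IH(1) \<open>h1 \<in> carrier G\<close> \<open>h2 \<in> carrier G\<close> assms(2) by (simp add: G.m_assoc[symmetric])
  finally show ?case .
qed (use c_square_central assms(2) in auto)

lemma rep_central_subgroup: "p \<in> central_subgroup \<Longrightarrow> rep p = 1 \<or> rep p = -1"
  unfolding central_subgroup_def
proof (induction rule: generate.induct)
  case (eng h1 h2)
  have "h1 \<in> carrier G" "h2 \<in> carrier G"
    using eng.hyps G.generate_in_carrier[of "{c_square}"] by auto
  with eng.IH show ?case by (auto simp: rep_mult)
qed (auto simp: rep_one rep_inv c_square_def S_mat_def one_mat2_eq)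

lemma gen_c_eq: "gen_c = word_class [lc]"
  by (simp add: gen_c_def word_class_def)

lemma meridian_eq: "meridian = word_class [lD, lc]"
  by (simp add: meridian_def gen_c_eq gen_d_def inv_word_class inv_word_def word_class_def[symmetric])

lemma subgroup_peripheral_subgroup: "subgroup peripheral_subgroup G"
  unfolding peripheral_subgroup_def
  by (rule G.generate_is_subgroup) (simp add: meridian_eq longitude_def gen_c_eq)

lemma meridian_in_peripheral_subgroup: "meridian \<in> peripheral_subgroup"
  unfolding peripheral_subgroup_def by (rule generate.incl) simp

lemma c_square_in_peripheral_subgroup: "c_square \<in> peripheral_subgroup"
proof -
  let ?\<mu>6 = "meridian [^]\<^bsub>G\<^esub> (6::nat)"
  have in_carrier: "?\<mu>6 \<in> carrier G" "gen_c [^]\<^bsub>G\<^esub> (2::nat) \<in> carrier G"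
    by (simp_all add: meridian_eq gen_c_eq)
  have c_square_eq: "c_square = longitude \<otimes>\<^bsub>G\<^esub> ?\<mu>6"
    using in_carrier by (simp add: longitude_def G.m_assoc gen_c_eq c_square_def numeral_2_eq_2)
  have "longitude \<in> peripheral_subgroup"
    unfolding peripheral_subgroup_def by (rule generate.incl) simp
  moreover have "?\<mu>6 \<in> peripheral_subgroup"
    using G.subgroup_int_pow_closed[OF subgroup_peripheral_subgroup meridian_in_peripheral_subgroup,
        of "int 6"]
    by (simp only: int_pow_int)
  ultimately show ?thesis
    unfolding c_square_eq by (rule subgroup.m_closed[OF subgroup_peripheral_subgroup])
qed

lemma central_subgroup_subset_peripheral_subgroup: "central_subgroup \<subseteq> peripheral_subgroup"
  unfolding central_subgroup_def
  using G.generate_subgroup_incl[OF _ subgroup_peripheral_subgroup] c_square_in_peripheral_subgroup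
  by blast

lemma c_d_in_peripheral_subgroup: "word_class [lc, ld] \<in> peripheral_subgroup"
proof -
  have "word_class [lc, ld] = c_square \<otimes>\<^bsub>G\<^esub> inv\<^bsub>G\<^esub> meridian"
    using word_class_cancel[of "[lc]" lc "[ld]"]
    by (simp add: meridian_eq inv_word_class inv_word_def c_square_def)
  then show ?thesis
    using subgroup.m_closed[OF subgroup_peripheral_subgroup c_square_in_peripheral_subgroup]
      subgroup.m_inv_closed[OF subgroup_peripheral_subgroup meridian_in_peripheral_subgroup]
    by simp
qed

lemma peripheral_if_in_peripheral_subgroup: "p \<in> peripheral_subgroup \<Longrightarrow> peripheral p"
  unfolding peripheral_def using subgroup.mem_carrier[OF subgroup_peripheral_subgroup]
  by (metis G.inv_one G.l_one G.one_closed G.r_one)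

lemma peripheral_conj:
  assumes "peripheral g" and "x \<in> carrier G"
  shows "peripheral (x \<otimes>\<^bsub>G\<^esub> g \<otimes>\<^bsub>G\<^esub> inv\<^bsub>G\<^esub> x)"
proof -
  obtain y p where y: "y \<in> carrier G" and p: "p \<in> peripheral_subgroup"
    and g: "g = y \<otimes>\<^bsub>G\<^esub> p \<otimes>\<^bsub>G\<^esub> inv\<^bsub>G\<^esub> y"
    using assms(1) unfolding peripheral_def by blast
  have "p \<in> carrier G" using p subgroup.mem_carrier[OF subgroup_peripheral_subgroup] by blast
  then have "x \<otimes>\<^bsub>G\<^esub> g \<otimes>\<^bsub>G\<^esub> inv\<^bsub>G\<^esub> x = (x \<otimes>\<^bsub>G\<^esub> y) \<otimes>\<^bsub>G\<^esub> p \<otimes>\<^bsub>G\<^esub> inv\<^bsub>G\<^esub> (x \<otimes>\<^bsub>G\<^esub> y)"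
    using g y assms(2) by (simp add: G.inv_mult_group G.m_assoc)
  then show ?thesis unfolding peripheral_def using y p assms(2) by blast
qed

lemma peripheral_conj_iff:
  assumes "x \<in> carrier G" and "g \<in> carrier G"
  shows "peripheral (x \<otimes>\<^bsub>G\<^esub> g \<otimes>\<^bsub>G\<^esub> inv\<^bsub>G\<^esub> x) \<longleftrightarrow> peripheral g"
proof
  assume "peripheral (x \<otimes>\<^bsub>G\<^esub> g \<otimes>\<^bsub>G\<^esub> inv\<^bsub>G\<^esub> x)"
  moreover have "inv\<^bsub>G\<^esub> x \<otimes>\<^bsub>G\<^esub> (x \<otimes>\<^bsub>G\<^esub> g \<otimes>\<^bsub>G\<^esub> inv\<^bsub>G\<^esub> x) \<otimes>\<^bsub>G\<^esub> inv\<^bsub>G\<^esub> (inv\<^bsub>G\<^esub> x) = g"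
    using assms by (simp add: G.m_assoc[symmetric]) (simp add: G.m_assoc)
  ultimately show "peripheral g" using peripheral_conj[of _ "inv\<^bsub>G\<^esub> x"] assms(1) by fastforce
qed (rule peripheral_conj[OF _ assms(1)])

section \<open>Normal forms modulo the centre\<close>

definition d_letter :: "bool \<Rightarrow> letter" where
  "d_letter e = (if e then ld else lD)"

definition syllables :: "bool list \<Rightarrow> word" where
  "syllables es = concat (map (\<lambda>e. [lc, d_letter e]) es)"

text \<open>Modulo the central subgroup, \<open>c\<close> has order 2 and \<open>d\<close> order 3, so every element is
  represented by an alternating word \<open>(d\<^sup>\<plusminus>\<^sup>1) (c d\<^sup>\<plusminus>\<^sup>1)\<^sup>* (c)\<close>.\<close>

definition normal_word :: "bool option \<Rightarrow> bool list \<Rightarrow> bool \<Rightarrow> word" where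
  "normal_word f es b =
     (case f of None \<Rightarrow> [] | Some e \<Rightarrow> [d_letter e]) @ syllables es @ (if b then [lc] else [])"

lemma syllables_Nil [simp]: "syllables [] = []"
  and syllables_Cons [simp]: "syllables (e # es) = lc # d_letter e # syllables es"
  and syllables_snoc [simp]: "syllables (es @ [e]) = syllables es @ [lc, d_letter e]"
  by (simp_all add: syllables_def)

definition central_normal_form :: "word set \<Rightarrow> bool" where
  "central_normal_form g \<longleftrightarrow>
     (\<exists>p\<in>central_subgroup. \<exists>f es b. g = p \<otimes>\<^bsub>G\<^esub> word_class (normal_word f es b))"

lemma central_normal_form_normal_word: "central_normal_form (word_class (normal_word f es b))"
proof -
  have "word_class (normal_word f es b) = \<one>\<^bsub>G\<^esub> \<otimes>\<^bsub>G\<^esub> word_class (normal_word f es b)" by simp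
  then show ?thesis
    unfolding central_normal_form_def using subgroup.one_closed[OF subgroup_central_subgroup] by blast
qed

lemma central_normal_form_mult_central:
  assumes p: "p \<in> central_subgroup" and g: "central_normal_form g"
  shows "central_normal_form (p \<otimes>\<^bsub>G\<^esub> g)"
proof -
  obtain q f es b where q: "q \<in> central_subgroup" and g: "g = q \<otimes>\<^bsub>G\<^esub> word_class (normal_word f es b)"
    using g unfolding central_normal_form_def by blast
  have "p \<otimes>\<^bsub>G\<^esub> g = (p \<otimes>\<^bsub>G\<^esub> q) \<otimes>\<^bsub>G\<^esub> word_class (normal_word f es b)"
    using g p q central_subgroup_in_carrier by (simp add: G.m_assoc)
  then show ?thesis
    unfolding central_normal_form_def using subgroup.m_closed[OF subgroup_central_subgroup p q] by blast
qed

lemma central_normal_form_c_square: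
  "word_class w = c_square \<otimes>\<^bsub>G\<^esub> word_class (normal_word f es b) \<Longrightarrow> central_normal_form (word_class w)"
  using central_normal_form_mult_central[OF c_square_in_central_subgroup central_normal_form_normal_word]
  by simp

lemma central_normal_form_c_Cons: "central_normal_form (word_class (lc # normal_word f es b))"
proof (cases f)
  case (Some e)
  then have "lc # normal_word f es b = normal_word None (e # es) b" by (simp add: normal_word_def)
  then show ?thesis using central_normal_form_normal_word by metis
next
  case None
  show ?thesis
  proof (cases es)
    case Nil
    then show ?thesis
      using None central_normal_form_normal_word[of None "[]" True]
        central_normal_form_c_square[of _ None "[]" False]
      by (cases b) (simp_all add: normal_word_def c_square_def)
  next
    case (Cons e es')
    then have "word_class (lc # normal_word f es b) = c_square \<otimes>\<^bsub>G\<^esub> word_class (normal_word (Some e) es' b)"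
      using None by (simp add: normal_word_def c_square_def)
    then show ?thesis by (rule central_normal_form_c_square)
  qed
qed

lemma word_class_d_d_Cons:
  "\<exists>p\<in>central_subgroup. \<exists>f. word_class (d_letter e' # normal_word (Some e) es b) =
     p \<otimes>\<^bsub>G\<^esub> word_class (normal_word f es b)"
proof -
  let ?rest = "syllables es @ (if b then [lc] else [])"
  consider "e' = e" "e" | "e' = e" "\<not> e" | "e' \<noteq> e" by blast
  then show ?thesis
  proof cases
    case 1
    then have "word_class (d_letter e' # normal_word (Some e) es b) = word_class [ld, ld] \<otimes>\<^bsub>G\<^esub> word_class ?rest"
      by (simp add: normal_word_def d_letter_def)
    also have "\<dots> = c_square \<otimes>\<^bsub>G\<^esub> word_class (normal_word (Some False) es b)"
      unfolding word_class_dd by (simp add: normal_word_def d_letter_def c_square_def)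
    finally show ?thesis using c_square_in_central_subgroup by blast
  next
    case 2
    then have "word_class (d_letter e' # normal_word (Some e) es b) = word_class [lD, lD] \<otimes>\<^bsub>G\<^esub> word_class ?rest"
      by (simp add: normal_word_def d_letter_def)
    also have "\<dots> = inv\<^bsub>G\<^esub> c_square \<otimes>\<^bsub>G\<^esub> word_class (normal_word (Some True) es b)"
      unfolding word_class_DD by (simp add: normal_word_def d_letter_def inv_c_square)
    finally show ?thesis using inv_c_square_in_central_subgroup by blast
  next
    case 3
    then have "word_class (d_letter e' # normal_word (Some e) es b)
        = word_class ([] @ inv_letter (d_letter e) # d_letter e # ?rest)"
      by (cases e; cases e') (simp_all add: normal_word_def d_letter_def)
    also have "\<dots> = \<one>\<^bsub>G\<^esub> \<otimes>\<^bsub>G\<^esub> word_class (normal_word None es b)"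
      using word_class_cancel[of "[]" "inv_letter (d_letter e)"] by (simp add: normal_word_def)
    finally show ?thesis using subgroup.one_closed[OF subgroup_central_subgroup] by blast
  qed
qed

lemma central_normal_form_d_Cons:
  "central_normal_form (word_class (d_letter e' # normal_word f es b))"
proof (cases f)
  case None
  then have "d_letter e' # normal_word f es b = normal_word (Some e') es b" by (simp add: normal_word_def)
  then show ?thesis using central_normal_form_normal_word by metis
next
  case (Some e)
  then obtain p f' where "p \<in> central_subgroup"
    and "word_class (d_letter e' # normal_word f es b) = p \<otimes>\<^bsub>G\<^esub> word_class (normal_word f' es b)"
    using word_class_d_d_Cons by blast
  then show ?thesis using central_normal_form_mult_central central_normal_form_normal_word by metis
qed

lemma central_normal_form_Cons: "central_normal_form (word_class (l # normal_word f es b))"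
proof (cases l rule: letter_mat.cases)
  case 1
  then show ?thesis using central_normal_form_c_Cons by simp
next
  case 2
  have "word_class (l # normal_word f es b) = inv\<^bsub>G\<^esub> c_square \<otimes>\<^bsub>G\<^esub> word_class (lc # normal_word f es b)"
    using 2 word_class_cancel[of "[lC]" lC "normal_word f es b"] by (simp add: inv_c_square)
  then show ?thesis
    using central_normal_form_mult_central[OF inv_c_square_in_central_subgroup central_normal_form_c_Cons]
    by simp
next
  case 3
  then show ?thesis using central_normal_form_d_Cons[of True] by (simp add: d_letter_def)
next
  case 4
  then show ?thesis using central_normal_form_d_Cons[of False] by (simp add: d_letter_def)
qed

lemma central_normal_form_all: "g \<in> carrier G \<Longrightarrow> central_normal_form g"
proof -
  have "central_normal_form (word_class w)" for w
  proof (induction w)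
    case Nil
    then show ?case using central_normal_form_normal_word[of None "[]" False] by (simp add: normal_word_def)
  next
    case (Cons l w)
    then obtain p f es b where p: "p \<in> central_subgroup"
      and w: "word_class w = p \<otimes>\<^bsub>G\<^esub> word_class (normal_word f es b)"
      unfolding central_normal_form_def by blast
    have p_carrier: "p \<in> carrier G" using central_subgroup_in_carrier[OF p] .
    have "word_class (l # w) = word_class [l] \<otimes>\<^bsub>G\<^esub> word_class w" by simp
    also have "\<dots> = (word_class [l] \<otimes>\<^bsub>G\<^esub> p) \<otimes>\<^bsub>G\<^esub> word_class (normal_word f es b)"
      using p_carrier by (simp add: w G.m_assoc)
    also have "\<dots> = p \<otimes>\<^bsub>G\<^esub> word_class (l # normal_word f es b)"
      using central_subgroup_central[OF p, of "word_class [l]", symmetric] p_carrier by (simp add: G.m_assoc)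
    finally show ?case
      using central_normal_form_mult_central[OF p central_normal_form_Cons] by simp
  qed
  then show "g \<in> carrier G \<Longrightarrow> ?thesis" by (auto simp: carrier_trefoil_group)
qed

section \<open>Conjugacy classes modulo the centre\<close>

definition cyclic_word :: "word \<Rightarrow> bool" where
  "cyclic_word k \<longleftrightarrow> k = [lc] \<or> k = [ld] \<or> k = [lD] \<or> (\<exists>es. k = syllables es)"

definition conj_central_cyclic :: "word set \<Rightarrow> bool" where
  "conj_central_cyclic g \<longleftrightarrow> (\<exists>x\<in>carrier G. \<exists>p\<in>central_subgroup. \<exists>k. cyclic_word k \<and>
     x \<otimes>\<^bsub>G\<^esub> g \<otimes>\<^bsub>G\<^esub> inv\<^bsub>G\<^esub> x = p \<otimes>\<^bsub>G\<^esub> word_class k)"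

lemma conj_central_cyclic_word: "cyclic_word k \<Longrightarrow> conj_central_cyclic (word_class k)"
  unfolding conj_central_cyclic_def using subgroup.one_closed[OF subgroup_central_subgroup]
  by (metis G.inv_one G.l_one G.one_closed G.r_one word_class_in_carrier)

lemma conj_central_cyclic_conj:
  assumes g: "g \<in> carrier G" and y: "y \<in> carrier G"
    and conj: "conj_central_cyclic (y \<otimes>\<^bsub>G\<^esub> g \<otimes>\<^bsub>G\<^esub> inv\<^bsub>G\<^esub> y)"
  shows "conj_central_cyclic g"
proof -
  obtain x p k where x: "x \<in> carrier G" and p: "p \<in> central_subgroup" and k: "cyclic_word k"
    and eq: "x \<otimes>\<^bsub>G\<^esub> (y \<otimes>\<^bsub>G\<^esub> g \<otimes>\<^bsub>G\<^esub> inv\<^bsub>G\<^esub> y) \<otimes>\<^bsub>G\<^esub> inv\<^bsub>G\<^esub> x = p \<otimes>\<^bsub>G\<^esub> word_class k"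
    using conj unfolding conj_central_cyclic_def by blast
  have "(x \<otimes>\<^bsub>G\<^esub> y) \<otimes>\<^bsub>G\<^esub> g \<otimes>\<^bsub>G\<^esub> inv\<^bsub>G\<^esub> (x \<otimes>\<^bsub>G\<^esub> y)
      = x \<otimes>\<^bsub>G\<^esub> (y \<otimes>\<^bsub>G\<^esub> g \<otimes>\<^bsub>G\<^esub> inv\<^bsub>G\<^esub> y) \<otimes>\<^bsub>G\<^esub> inv\<^bsub>G\<^esub> x"
    using x y g by (simp add: G.inv_mult_group G.m_assoc)
  then show ?thesis
    unfolding conj_central_cyclic_def using eq x y p k by (metis G.m_closed)
qed

lemma conj_central_cyclic_rotate:
  assumes "conj_central_cyclic (word_class (v @ u))"
  shows "conj_central_cyclic (word_class (u @ v))"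
proof -
  have "word_class (inv_word u) \<otimes>\<^bsub>G\<^esub> word_class (u @ v) \<otimes>\<^bsub>G\<^esub> inv\<^bsub>G\<^esub> (word_class (inv_word u))
      = word_class (inv_word u @ u @ v @ u)"
    by (simp add: inv_word_class)
  also have "\<dots> = word_class (v @ u)"
    using word_eq_append_right[OF word_eq_inv_word_append[of u], of "v @ u"]
    by (simp add: word_class_eq_iff)
  finally show ?thesis
    using conj_central_cyclic_conj[of "word_class (u @ v)" "word_class (inv_word u)"] assms by simp
qed

lemma conj_central_cyclic_mult_central:
  assumes p: "p \<in> central_subgroup" and g: "g \<in> carrier G" and conj: "conj_central_cyclic g"
  shows "conj_central_cyclic (p \<otimes>\<^bsub>G\<^esub> g)"
proof -
  obtain x q k where x: "x \<in> carrier G" and q: "q \<in> central_subgroup" and k: "cyclic_word k"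
    and eq: "x \<otimes>\<^bsub>G\<^esub> g \<otimes>\<^bsub>G\<^esub> inv\<^bsub>G\<^esub> x = q \<otimes>\<^bsub>G\<^esub> word_class k"
    using conj unfolding conj_central_cyclic_def by blast
  have p_carrier: "p \<in> carrier G" and q_carrier: "q \<in> carrier G"
    using p q central_subgroup_in_carrier by auto
  have "x \<otimes>\<^bsub>G\<^esub> (p \<otimes>\<^bsub>G\<^esub> g) \<otimes>\<^bsub>G\<^esub> inv\<^bsub>G\<^esub> x = (x \<otimes>\<^bsub>G\<^esub> p) \<otimes>\<^bsub>G\<^esub> g \<otimes>\<^bsub>G\<^esub> inv\<^bsub>G\<^esub> x"
    using x p_carrier g by (simp add: G.m_assoc)
  also have "\<dots> = p \<otimes>\<^bsub>G\<^esub> (x \<otimes>\<^bsub>G\<^esub> g \<otimes>\<^bsub>G\<^esub> inv\<^bsub>G\<^esub> x)"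
    using central_subgroup_central[OF p x, symmetric] x p_carrier g by (simp add: G.m_assoc)
  also have "\<dots> = (p \<otimes>\<^bsub>G\<^esub> q) \<otimes>\<^bsub>G\<^esub> word_class k"
    using p_carrier q_carrier by (simp add: eq G.m_assoc)
  finally show ?thesis
    unfolding conj_central_cyclic_def
    using x k subgroup.m_closed[OF subgroup_central_subgroup p q] by blast
qed

lemma conj_central_cyclic_normal_word: "conj_central_cyclic (word_class (normal_word f es b))"
proof (induction "length es" arbitrary: f es b rule: less_induct)
  case less
  show ?case
  proof (cases b)
    case True
    show ?thesis
    proof (cases f)
      case (Some e)
      have "normal_word f es b = [d_letter e] @ (syllables es @ [lc])"
        using Some True by (simp add: normal_word_def)
      moreover have "(syllables es @ [lc]) @ [d_letter e] = syllables (es @ [e])" by simp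
      ultimately show ?thesis
        using conj_central_cyclic_rotate conj_central_cyclic_word cyclic_word_def by metis
    next
      case None
      show ?thesis
      proof (cases es)
        case Nil
        then show ?thesis
          using None True conj_central_cyclic_word by (simp add: cyclic_word_def normal_word_def)
      next
        case (Cons e es')
        have "normal_word f es b = (lc # d_letter e # syllables es') @ [lc]"
          using None True Cons by (simp add: normal_word_def)
        moreover have "word_class ([lc] @ (lc # d_letter e # syllables es'))
            = c_square \<otimes>\<^bsub>G\<^esub> word_class (normal_word (Some e) es' False)"
          by (simp add: normal_word_def c_square_def)
        moreover have "conj_central_cyclic (c_square \<otimes>\<^bsub>G\<^esub> word_class (normal_word (Some e) es' False))"
          using conj_central_cyclic_mult_central[OF c_square_in_central_subgroup] less Cons by simp
        ultimately show ?thesis using conj_central_cyclic_rotate by metis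
      qed
    qed
  next
    case False
    show ?thesis
    proof (cases f)
      case None
      then show ?thesis
        using False conj_central_cyclic_word by (auto simp: cyclic_word_def normal_word_def)
    next
      case (Some e)
      show ?thesis
      proof (cases es rule: rev_cases)
        case Nil
        then show ?thesis
          using Some False conj_central_cyclic_word by (auto simp: cyclic_word_def normal_word_def d_letter_def)
      next
        case (snoc es' e')
        have shorter: "length es' < length es" using snoc by simp
        have "normal_word f es b = ([d_letter e] @ syllables es' @ [lc]) @ [d_letter e']"
          using Some False snoc by (simp add: normal_word_def)
        moreover obtain p f' where p: "p \<in> central_subgroup"
          and eq: "word_class (d_letter e' # normal_word (Some e) es' True) =
            p \<otimes>\<^bsub>G\<^esub> word_class (normal_word f' es' True)"
          using word_class_d_d_Cons by blast
        have "conj_central_cyclic (p \<otimes>\<^bsub>G\<^esub> word_class (normal_word f' es' True))"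
          by (rule conj_central_cyclic_mult_central[OF p word_class_in_carrier less[OF shorter]])
        then have "conj_central_cyclic (word_class ([d_letter e'] @ ([d_letter e] @ syllables es' @ [lc])))"
          unfolding eq[symmetric] by (simp add: normal_word_def)
        ultimately show ?thesis using conj_central_cyclic_rotate by metis
      qed
    qed
  qed
qed

lemma conj_central_cyclic_all: "g \<in> carrier G \<Longrightarrow> conj_central_cyclic g"
proof -
  assume "g \<in> carrier G"
  then obtain p f es b where p: "p \<in> central_subgroup"
    and g: "g = p \<otimes>\<^bsub>G\<^esub> word_class (normal_word f es b)"
    using central_normal_form_all unfolding central_normal_form_def by blast
  show ?thesis
    unfolding g by (rule conj_central_cyclic_mult_central[OF p word_class_in_carrier conj_central_cyclic_normal_word])
qed

section \<open>Traces of syllable words\<close>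

definition T_mat :: mat2 where "T_mat = M2 1 1 0 1"

definition L_mat :: mat2 where "L_mat = M2 1 0 1 1"

definition syllable_mat :: "bool \<Rightarrow> mat2" where
  "syllable_mat e = (if e then T_mat else L_mat)"

lemma word_mat_syllables:
  "word_mat (syllables es) = prod_list (map syllable_mat es) \<or>
   word_mat (syllables es) = - prod_list (map syllable_mat es)"
proof (induction es)
  case (Cons e es)
  have "word_mat [lc, d_letter e] = (if e then - T_mat else L_mat)"
    by (cases e) (auto simp: d_letter_def S_mat_def U_mat_def T_mat_def L_mat_def)
  with Cons show ?case by (cases e) (auto simp: syllable_mat_def mult.assoc[symmetric])
qed simp

fun positive_mat :: "mat2 \<Rightarrow> bool" where
  "positive_mat (M2 a b c d) \<longleftrightarrow> 1 \<le> a \<and> 0 \<le> b \<and> 0 \<le> c \<and> 1 \<le> d"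

fun entrywise_le :: "mat2 \<Rightarrow> mat2 \<Rightarrow> bool" where
  "entrywise_le (M2 a b c d) (M2 a' b' c' d') \<longleftrightarrow> a \<le> a' \<and> b \<le> b' \<and> c \<le> c' \<and> d \<le> d'"

lemma positive_mat_mult: "positive_mat M \<Longrightarrow> positive_mat N \<Longrightarrow> positive_mat (M * N)"
proof (cases M; cases N)
  fix a b c d a' b' c' d'
  assume "positive_mat M" "positive_mat N" and MN: "M = M2 a b c d" "N = M2 a' b' c' d'"
  then have "1 \<le> a" "0 \<le> b" "0 \<le> c" "1 \<le> d" "1 \<le> a'" "0 \<le> b'" "0 \<le> c'" "1 \<le> d'" by auto
  moreover have "1 \<le> x * y" if "1 \<le> x" "1 \<le> y" for x y :: int
    using that mult_mono[of 1 x 1 y] by simp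
  ultimately have "1 \<le> a * a'" "1 \<le> d * d'" "0 \<le> b * c'" "0 \<le> c * b'"
    "0 \<le> a * b'" "0 \<le> b * d'" "0 \<le> c * a'" "0 \<le> d * c'"
    by auto
  then show "positive_mat (M * N)" unfolding MN by simp
qed

lemma positive_prod_syllable_mat: "positive_mat (prod_list (map syllable_mat es))"
  by (induction es) (auto intro: positive_mat_mult simp: syllable_mat_def T_mat_def L_mat_def one_mat2_eq)

lemma entrywise_le_mult_left: "positive_mat M \<Longrightarrow> positive_mat N \<Longrightarrow> entrywise_le N (M * N)"
  by (cases M; cases N) (simp, smt (verit) mult_le_cancel_right1 mult_nonneg_nonneg mult_left_mono)

lemma entrywise_le_mult_right: "positive_mat M \<Longrightarrow> positive_mat N \<Longrightarrow> entrywise_le M (M * N)"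
  by (cases M; cases N) (simp, smt (verit) mult_le_cancel_left1 mult_nonneg_nonneg mult_right_mono)

lemma entrywise_le_mult_mono:
  "entrywise_le M M' \<Longrightarrow> positive_mat M \<Longrightarrow> positive_mat N \<Longrightarrow> entrywise_le (M * N) (M' * N)"
  by (cases M; cases M'; cases N) (simp, smt (verit) mult_right_mono)

lemma entrywise_le_trace: "entrywise_le M N \<Longrightarrow> trace M \<le> trace N"
  by (cases M; cases N) auto

lemma trace_prod_syllable_mat_ge_3:
  assumes "True \<in> set es" and "False \<in> set es"
  shows "3 \<le> trace (prod_list (map syllable_mat es))"
proof -
  obtain xs e ys zs where es: "es = xs @ [e] @ ys @ [\<not> e] @ zs"
  proof -
    obtain xs rest where es: "es = xs @ True # rest" using split_list[OF assms(1)] by blast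
    show ?thesis
    proof (cases "False \<in> set xs")
      case True
      then obtain us vs where "xs = us @ False # vs" by (meson split_list)
      with es that[of us False vs rest] show ?thesis by simp
    next
      case False
      then have "False \<in> set rest" using assms(2) es by auto
      then obtain us vs where "rest = us @ False # vs" by (meson split_list)
      with es that[of xs True us vs] show ?thesis by simp
    qed
  qed
  let ?P = "\<lambda>zs. prod_list (map syllable_mat zs)"
  let ?M = "syllable_mat e * ?P ys * syllable_mat (\<not> e)"
  have positive: "positive_mat (syllable_mat e)" "positive_mat (syllable_mat (\<not> e))"
    by (cases e; simp add: syllable_mat_def T_mat_def L_mat_def)+
  have "trace (syllable_mat e * syllable_mat (\<not> e)) = 3"
    by (cases e) (simp_all add: syllable_mat_def T_mat_def L_mat_def)
  moreover have "trace (syllable_mat e * syllable_mat (\<not> e)) \<le> trace ?M"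
    by (intro entrywise_le_trace entrywise_le_mult_mono entrywise_le_mult_right
        positive positive_prod_syllable_mat positive_mat_mult)
  moreover have "trace ?M \<le> trace ((?P zs * ?P xs) * ?M)"
    by (intro entrywise_le_trace entrywise_le_mult_left positive_mat_mult
        positive positive_prod_syllable_mat)
  moreover have "trace ((?P zs * ?P xs) * ?M) = trace (?P es)"
    using trace_mult_commute[of "?P zs * ?P xs" ?M] trace_mult_commute[of "?P zs" "?P xs * ?M"]
      trace_mult_commute[of "?P xs" "?M * ?P zs"]
    by (simp add: es mult.assoc)
  ultimately show ?thesis by linarith
qed

section \<open>Elements of trace \<open>\<plusminus>2\<close> are peripheral\<close>

lemma peripheral_mult_central:
  assumes p: "p \<in> central_subgroup" and g: "peripheral g"
  shows "peripheral (p \<otimes>\<^bsub>G\<^esub> g)"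
proof -
  obtain y q where y: "y \<in> carrier G" and q: "q \<in> peripheral_subgroup"
    and g: "g = y \<otimes>\<^bsub>G\<^esub> q \<otimes>\<^bsub>G\<^esub> inv\<^bsub>G\<^esub> y"
    using g unfolding peripheral_def by blast
  have p_carrier: "p \<in> carrier G" and q_carrier: "q \<in> carrier G"
    using p q central_subgroup_in_carrier subgroup.mem_carrier[OF subgroup_peripheral_subgroup] by auto
  have "p \<otimes>\<^bsub>G\<^esub> g = (p \<otimes>\<^bsub>G\<^esub> y) \<otimes>\<^bsub>G\<^esub> q \<otimes>\<^bsub>G\<^esub> inv\<^bsub>G\<^esub> y"
    using g y p_carrier q_carrier by (simp add: G.m_assoc)
  also have "\<dots> = y \<otimes>\<^bsub>G\<^esub> (p \<otimes>\<^bsub>G\<^esub> q) \<otimes>\<^bsub>G\<^esub> inv\<^bsub>G\<^esub> y"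
    using central_subgroup_central[OF p y] y p_carrier q_carrier by (simp add: G.m_assoc)
  finally show ?thesis
    unfolding peripheral_def using y subgroup.m_closed[OF subgroup_peripheral_subgroup
        subsetD[OF central_subgroup_subset_peripheral_subgroup p] q]
    by blast
qed

lemma syllables_in_peripheral_subgroup:
  "False \<notin> set es \<Longrightarrow> word_class (syllables es) \<in> peripheral_subgroup"
proof (induction es)
  case Nil
  then show ?case using subgroup.one_closed[OF subgroup_peripheral_subgroup] by (simp add: one_word_class)
next
  case (Cons e es)
  then have e: "e" and IH: "word_class (syllables es) \<in> peripheral_subgroup" by auto
  have "word_class [lc, ld] \<otimes>\<^bsub>G\<^esub> word_class (syllables es) \<in> peripheral_subgroup"
    by (rule subgroup.m_closed[OF subgroup_peripheral_subgroup c_d_in_peripheral_subgroup IH])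
  with e show ?case by (simp add: d_letter_def)
qed

lemma meridian_word_in_peripheral_subgroup:
  "word_class (concat (replicate n [lD, lc])) \<in> peripheral_subgroup"
proof (induction n)
  case 0
  then show ?case using subgroup.one_closed[OF subgroup_peripheral_subgroup] by (simp add: one_word_class)
next
  case (Suc n)
  then have "meridian \<otimes>\<^bsub>G\<^esub> word_class (concat (replicate n [lD, lc])) \<in> peripheral_subgroup"
    using subgroup.m_closed[OF subgroup_peripheral_subgroup meridian_in_peripheral_subgroup] by simp
  then show ?case by (simp add: meridian_eq)
qed

lemma word_class_syllables_conj:
  "True \<notin> set es \<Longrightarrow>
     word_class (syllables es) = word_class ([lc] @ concat (replicate (length es) [lD, lc]) @ [lC])"
proof (induction es)
  case Nil
  then show ?case using word_class_cancel[of "[]" lc "[]"] by simp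
next
  case (Cons e es)
  then have e: "\<not> e" and IH: "word_class (syllables es) =
      word_class ([lc] @ concat (replicate (length es) [lD, lc]) @ [lC])" by auto
  have "word_class (syllables (e # es)) = word_class [lc, lD] \<otimes>\<^bsub>G\<^esub> word_class (syllables es)"
    using e by (simp add: d_letter_def)
  also have "\<dots> = word_class [lc, lD] \<otimes>\<^bsub>G\<^esub>
      word_class ([lc] @ concat (replicate (length es) [lD, lc]) @ [lC])"
    by (simp only: IH)
  finally show ?case by simp
qed

lemma peripheral_cyclic_word:
  assumes "cyclic_word k" and "trace (word_mat k) = 2 \<or> trace (word_mat k) = -2"
  shows "peripheral (word_class k)"
proof -
  obtain es where es: "k = syllables es"
    using assms by (auto simp: cyclic_word_def S_mat_def U_mat_def)
  have "\<not> (True \<in> set es \<and> False \<in> set es)"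
    using word_mat_syllables[of es] trace_prod_syllable_mat_ge_3[of es] assms(2) es by auto
  then consider "False \<notin> set es" | "True \<notin> set es" by blast
  then show ?thesis
  proof cases
    case 1
    then show ?thesis
      using es syllables_in_peripheral_subgroup peripheral_if_in_peripheral_subgroup by simp
  next
    case 2
    let ?\<mu> = "word_class (concat (replicate (length es) [lD, lc]))"
    have k: "word_class k = word_class [lc] \<otimes>\<^bsub>G\<^esub> ?\<mu> \<otimes>\<^bsub>G\<^esub> inv\<^bsub>G\<^esub> (word_class [lc])"
      using 2 es word_class_syllables_conj by (simp add: inv_word_class inv_word_def)
    show ?thesis
      unfolding k by (intro peripheral_conj peripheral_if_in_peripheral_subgroup
          meridian_word_in_peripheral_subgroup word_class_in_carrier)
  qed
qed

theorem peripheral_if_trace_pm2: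
  assumes g: "g \<in> carrier G" and trace: "trace (rep g) = 2 \<or> trace (rep g) = -2"
  shows "peripheral g"
proof -
  obtain x p k where x: "x \<in> carrier G" and p: "p \<in> central_subgroup" and k: "cyclic_word k"
    and conj: "x \<otimes>\<^bsub>G\<^esub> g \<otimes>\<^bsub>G\<^esub> inv\<^bsub>G\<^esub> x = p \<otimes>\<^bsub>G\<^esub> word_class k"
    using conj_central_cyclic_all[OF g] unfolding conj_central_cyclic_def by blast
  have "trace (rep (p \<otimes>\<^bsub>G\<^esub> word_class k)) = trace (rep g)"
    using trace_rep_conj[OF x g] by (simp add: conj)
  moreover have "rep (p \<otimes>\<^bsub>G\<^esub> word_class k) = rep p * word_mat k"
    using central_subgroup_in_carrier[OF p] by (simp add: rep_mult)
  ultimately have "trace (word_mat k) = 2 \<or> trace (word_mat k) = -2"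
    using rep_central_subgroup[OF p] trace by auto
  then have "peripheral (x \<otimes>\<^bsub>G\<^esub> g \<otimes>\<^bsub>G\<^esub> inv\<^bsub>G\<^esub> x)"
    unfolding conj by (intro peripheral_mult_central[OF p] peripheral_cyclic_word[OF k])
  then show ?thesis using peripheral_conj_iff[OF x g] by simp
qed

lemma rep_generate:
  assumes "H \<subseteq> carrier G" and "g \<in> generate G H"
  shows "rep g \<in> submonoid_generated (rep ` H \<union> adj ` rep ` H)"
  using assms(2)
proof (induction rule: generate.induct)
  case (eng h1 h2)
  then have "h1 \<in> carrier G" "h2 \<in> carrier G" using G.generate_in_carrier[OF assms(1)] by auto
  with eng.IH show ?case by (simp add: rep_mult submonoid_generated.mult)
next
  case (inv h)
  then have "h \<in> carrier G" using assms(1) by auto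
  with inv show ?case by (auto simp: rep_inv intro: submonoid_generated.incl)
qed (auto simp: rep_one intro: submonoid_generated.intros)

lemma S_U_generated_if_generate:
  assumes "\<alpha> \<in> carrier G" "\<beta> \<in> carrier G" and "generate G {\<alpha>, \<beta>} = carrier G"
  defines "M \<equiv> submonoid_generated {rep \<alpha>, adj (rep \<alpha>), rep \<beta>, adj (rep \<beta>)}"
  shows "S_mat \<in> M" and "U_mat \<in> M" and "S_mat * U_mat * adj S_mat \<in> M"
proof -
  have "rep g \<in> M" if "g \<in> carrier G" for g
  proof -
    have "rep ` {\<alpha>, \<beta>} \<union> adj ` rep ` {\<alpha>, \<beta>} = {rep \<alpha>, adj (rep \<alpha>), rep \<beta>, adj (rep \<beta>)}" by auto
    then show ?thesis using rep_generate[of "{\<alpha>, \<beta>}" g] that assms(1-3) by (simp add: M_def)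
  qed
  from this[of "word_class [lc]"] this[of "word_class [ld]"] this[of "word_class [lc, ld, lC]"]
  show "S_mat \<in> M" "U_mat \<in> M" "S_mat * U_mat * adj S_mat \<in> M"
    by (simp_all add: mult.assoc)
qed

theorem mainTheorem9:
  fixes \<alpha> \<beta> :: "word set"
  assumes "\<alpha> \<in> carrier trefoil_group" and "\<beta> \<in> carrier trefoil_group"
    and "\<exists>x\<in>carrier trefoil_group.
           \<beta> = x \<otimes>\<^bsub>trefoil_group\<^esub> \<alpha> \<otimes>\<^bsub>trefoil_group\<^esub> inv\<^bsub>trefoil_group\<^esub> x"
    and "generate trefoil_group {\<alpha>, \<beta>} = carrier trefoil_group"
  shows "peripheral \<alpha> \<and> peripheral \<beta>"
proof -
  obtain x where x: "x \<in> carrier G" and \<beta>: "\<beta> = x \<otimes>\<^bsub>G\<^esub> \<alpha> \<otimes>\<^bsub>G\<^esub> inv\<^bsub>G\<^esub> x"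
    using assms(3) by blast
  have "trace (rep \<beta>) = trace (rep \<alpha>)"
    unfolding \<beta> using trace_rep_conj[OF x assms(1)] .
  then have "trace (rep \<alpha>) = 2 \<or> trace (rep \<alpha>) = -2"
    using trace_eq_pm2_if_generated det_rep assms(1,2) S_U_generated_if_generate[OF assms(1,2,4)]
    by blast
  then have "peripheral \<alpha>" by (rule peripheral_if_trace_pm2[OF assms(1)])
  moreover from this have "peripheral \<beta>" unfolding \<beta> by (rule peripheral_conj[OF _ x])
  ultimately show ?thesis ..
qed

end
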